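(* Let $P$ and $Q$ be probability distributions on a nonempty set $\mathcal{X}\subseteq\mathbb{R}^d$ and let $c\in(0,1)$. Let $\mathcal{F}$ be the set of measurable functions $h:\mathcal{X}\to\mathbb{R}$ with $\mathbb{E}_{X\sim P}[h(X)^2]<\infty$ and $\mathbb{E}_{Y\sim Q}[h(Y)^2]<\infty$. Assume $L_{P,Q,c}(h)>0$ for every $h\in\mathcal{F}$. Suppose $h^*\in\mathcal{F}$ minimizes the squared loss, i.e. $L_{P,Q,c}(h^* )=\min_{h\in\mathcal{F}}L_{P,Q,c}(h)$, and $\sigma_c(h^* )>0$. Then $h^*$ maximizes the signal-to-noise ratio: $\mathrm{SNR}(h^* )\ge \mathrm{SNR}(h)$ for every $h\in\mathcal{F}$ with $\sigma_c(h)>0$.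
   Context: For $h\in\mathcal{F}$ define: $\tau(P,Q\mid h)=\mathbb{E}_{X\sim P}[h(X)]-\mathbb{E}_{Y\sim Q}[h(Y)]$; $\sigma_c^2(h)=\dfrac{(1-c)\,\mathrm{Var}_{X\sim P}[h(X)]+c\,\mathrm{Var}_{Y\sim Q}[h(Y)]}{c(1-c)}$ with $\sigma_c(h)\ge0$; $\mathrm{SNR}(h)=\tau(P,Q\mid h)/\sigma_c(h)$ (defined when $\sigma_c(h)>0$); and $L_{P,Q,c}(h)=(1-c)\,\mathbb{E}_{X\sim P}[(1-h(X))^2]+c\,\mathbb{E}_{Y\sim Q}[h(Y)^2]$. *)

theory Defs
  imports "HOL-Probability.Probability"
begin

definition tau :: "'a measure \<Rightarrow> 'a measure \<Rightarrow> ('a \<Rightarrow> real) \<Rightarrow> real" where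
  "tau P Q h = (\<integral>x. h x \<partial>P) - (\<integral>y. h y \<partial>Q)"

definition var :: "'a measure \<Rightarrow> ('a \<Rightarrow> real) \<Rightarrow> real" where
  "var M h = (\<integral>x. (h x - (\<integral>z. h z \<partial>M))\<^sup>2 \<partial>M)"

definition sigma2 :: "'a measure \<Rightarrow> 'a measure \<Rightarrow> real \<Rightarrow> ('a \<Rightarrow> real) \<Rightarrow> real" where
  "sigma2 P Q c h = ((1 - c) * var P h + c * var Q h) / (c * (1 - c))"

definition sigma :: "'a measure \<Rightarrow> 'a measure \<Rightarrow> real \<Rightarrow> ('a \<Rightarrow> real) \<Rightarrow> real" where
  "sigma P Q c h = sqrt (sigma2 P Q c h)"

definition SNR :: "'a measure \<Rightarrow> 'a measure \<Rightarrow> real \<Rightarrow> ('a \<Rightarrow> real) \<Rightarrow> real" where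
  "SNR P Q c h = tau P Q h / sigma P Q c h"

definition sqloss :: "'a measure \<Rightarrow> 'a measure \<Rightarrow> real \<Rightarrow> ('a \<Rightarrow> real) \<Rightarrow> real" where
  "sqloss P Q c h = (1 - c) * (\<integral>x. (1 - h x)\<^sup>2 \<partial>P) + c * (\<integral>y. (h y)\<^sup>2 \<partial>Q)"

definition Fcls :: "'a::euclidean_space set \<Rightarrow> 'a measure \<Rightarrow> 'a measure \<Rightarrow> ('a \<Rightarrow> real) set" where
  "Fcls X P Q = {h. h \<in> borel_measurable (restrict_space borel X)
      \<and> integrable P (\<lambda>x. (h x)\<^sup>2) \<and> integrable Q (\<lambda>y. (h y)\<^sup>2)}"

end

theory Submission
  imports Defs
begin

text \<open>For \<open>h \<in> \<F>\<close> the loss of \<open>a + b h\<close> is a square in \<open>a\<close> plus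
  \<open>c(1-c) q\<^sub>h(b)\<close>, where \<open>q\<^sub>h(b) = (1 - b \<tau>(h))\<^sup>2 + b\<^sup>2 \<sigma>\<^sub>c(h)\<^sup>2\<close>. As \<open>\<F>\<close> is closed under affine maps,
  the minimiser satisfies \<open>q\<^sub>h\<^sub>*(1) \<le> q\<^sub>h(b)\<close> for all \<open>h \<in> \<F>\<close> and all \<open>b\<close>. Taking \<open>b = 0\<close> forces
  \<open>\<tau>(h\<^sup>*) > 0\<close>; minimising over \<open>b\<close> on both sides, where \<open>min q\<^sub>h = 1/(1 + SNR(h)\<^sup>2)\<close>, gives
  \<open>SNR(h)\<^sup>2 \<le> SNR(h\<^sup>*)\<^sup>2\<close>.\<close>

lemma integral_square_affine:
  fixes h :: "'a \<Rightarrow> real"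
  assumes "prob_space M" and "h \<in> borel_measurable M" and "integrable M (\<lambda>x. (h x)\<^sup>2)"
  shows "(\<integral>x. (k - (a + b * h x))\<^sup>2 \<partial>M) = (k - a - b * (\<integral>x. h x \<partial>M))\<^sup>2 + b\<^sup>2 * var M h"
proof -
  interpret prob_space M by fact
  have h: "integrable M h"
    using square_integrable_imp_integrable assms(2,3) .
  have expand: "(k - (a + b * h x))\<^sup>2 = (k - a)\<^sup>2 + (- 2 * (k - a) * b) * h x + b\<^sup>2 * (h x)\<^sup>2" for x
    by (simp add: power2_eq_square algebra_simps)
  have integral: "(\<integral>x. (k - (a + b * h x))\<^sup>2 \<partial>M)
      = (k - a)\<^sup>2 + (- 2 * (k - a) * b) * (\<integral>x. h x \<partial>M) + b\<^sup>2 * (\<integral>x. (h x)\<^sup>2 \<partial>M)"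
    unfolding expand using h assms(3) by (simp add: prob_space)
  have variance: "var M h = (\<integral>x. (h x)\<^sup>2 \<partial>M) - (\<integral>x. h x \<partial>M)\<^sup>2"
    unfolding var_def using variance_eq[OF h assms(3)] by simp
  show ?thesis
    unfolding integral variance by (simp add: power2_eq_square algebra_simps)
qed

lemma measurable_Fcls:
  assumes "sets M = sets (restrict_space borel X)" and "h \<in> Fcls X P Q"
  shows "h \<in> borel_measurable M"
  using assms measurable_cong_sets[of M "restrict_space borel X" borel borel]
  unfolding Fcls_def by auto

lemma Fcls_affine:
  assumes "finite_measure P" "sets P = sets (restrict_space borel X)"
    and "finite_measure Q" "sets Q = sets (restrict_space borel X)"
    and h: "h \<in> Fcls X P Q"
  shows "(\<lambda>x. a + b * h x) \<in> Fcls X P Q"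
proof -
  have expand: "(a + b * h x)\<^sup>2 = a\<^sup>2 + (2 * a * b) * h x + b\<^sup>2 * (h x)\<^sup>2" for x
    by (simp add: power2_eq_square algebra_simps)
  have "integrable M (\<lambda>x. (a + b * h x)\<^sup>2)"
    if "finite_measure M" "sets M = sets (restrict_space borel X)" "integrable M (\<lambda>x. (h x)\<^sup>2)"
    for M
  proof -
    interpret finite_measure M by fact
    have "integrable M h"
      using square_integrable_imp_integrable measurable_Fcls that(2,3) h by blast
    then show ?thesis
      unfolding expand using that(3) by simp
  qed
  moreover have "h \<in> borel_measurable (restrict_space borel X)"
    using h unfolding Fcls_def by simp
  then have "(\<lambda>x. a + b * h x) \<in> borel_measurable (restrict_space borel X)"
    by measurable
  ultimately show ?thesis
    using assms h unfolding Fcls_def by auto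
qed

lemma convex_combination_squares:
  fixes c x y :: "'a::comm_ring_1"
  shows "(1 - c) * x\<^sup>2 + c * y\<^sup>2 = ((1 - c) * x + c * y)\<^sup>2 + c * (1 - c) * (x - y)\<^sup>2"
  by (simp add: power2_eq_square algebra_simps)

lemma sqloss_affine:
  fixes h :: "'a \<Rightarrow> real"
  assumes "prob_space P" "h \<in> borel_measurable P" "integrable P (\<lambda>x. (h x)\<^sup>2)"
    and "prob_space Q" "h \<in> borel_measurable Q" "integrable Q (\<lambda>y. (h y)\<^sup>2)"
    and "c \<noteq> 0" "c \<noteq> 1"
  shows "sqloss P Q c (\<lambda>x. a + b * h x)
    = ((1 - c) * (1 - b * (\<integral>x. h x \<partial>P)) - c * b * (\<integral>y. h y \<partial>Q) - a)\<^sup>2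
      + c * (1 - c) * ((1 - b * tau P Q h)\<^sup>2 + b\<^sup>2 * sigma2 P Q c h)"
proof -
  define x y where "x = 1 - a - b * (\<integral>x. h x \<partial>P)" and "y = 0 - a - b * (\<integral>y. h y \<partial>Q)"
  have "(\<integral>x. (1 - (a + b * h x))\<^sup>2 \<partial>P) = x\<^sup>2 + b\<^sup>2 * var P h"
    unfolding x_def by (rule integral_square_affine[OF assms(1-3)])
  moreover have "(\<integral>y. (a + b * h y)\<^sup>2 \<partial>Q) = (\<integral>y. (0 - (a + b * h y))\<^sup>2 \<partial>Q)"
    by (rule Bochner_Integration.integral_cong) (simp_all add: power2_eq_square algebra_simps)
  moreover have "\<dots> = y\<^sup>2 + b\<^sup>2 * var Q h"
    unfolding y_def by (rule integral_square_affine[OF assms(4-6)])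
  ultimately have "sqloss P Q c (\<lambda>x. a + b * h x)
      = (1 - c) * (x\<^sup>2 + b\<^sup>2 * var P h) + c * (y\<^sup>2 + b\<^sup>2 * var Q h)"
    by (simp only: sqloss_def)
  also have "\<dots> = ((1 - c) * x\<^sup>2 + c * y\<^sup>2) + b\<^sup>2 * ((1 - c) * var P h + c * var Q h)"
    by (simp add: algebra_simps)
  also have "(1 - c) * var P h + c * var Q h = c * (1 - c) * sigma2 P Q c h"
    using assms(7,8) by (simp add: sigma2_def)
  also have "((1 - c) * x\<^sup>2 + c * y\<^sup>2) + b\<^sup>2 * (c * (1 - c) * sigma2 P Q c h)
      = ((1 - c) * x + c * y)\<^sup>2 + c * (1 - c) * ((x - y)\<^sup>2 + b\<^sup>2 * sigma2 P Q c h)"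
    unfolding convex_combination_squares by (simp add: algebra_simps)
  also have "(1 - c) * x + c * y = (1 - c) * (1 - b * (\<integral>x. h x \<partial>P)) - c * b * (\<integral>y. h y \<partial>Q) - a"
    unfolding x_def y_def by (simp add: algebra_simps)
  also have "x - y = 1 - b * tau P Q h"
    unfolding x_def y_def tau_def by (simp add: algebra_simps)
  finally show ?thesis .
qed

lemma quadratic_complete_square:
  fixes b T V :: real
  shows "(T\<^sup>2 + V) * ((1 - b * T)\<^sup>2 + b\<^sup>2 * V) = V + (T - b * (T\<^sup>2 + V))\<^sup>2"
  by (simp add: power2_eq_square algebra_simps)

lemma quadratic_min_le:
  fixes b T V :: real
  assumes "0 < V"
  shows "V / (T\<^sup>2 + V) \<le> (1 - b * T)\<^sup>2 + b\<^sup>2 * V"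
proof -
  have "0 < T\<^sup>2 + V"
    using assms by (simp add: add_nonneg_pos)
  then show ?thesis
    using quadratic_complete_square[of T V b] by (simp add: divide_le_eq mult.commute)
qed

lemma quadratic_at_argmin:
  fixes T V :: real
  assumes "0 < V"
  defines "b \<equiv> T / (T\<^sup>2 + V)"
  shows "(1 - b * T)\<^sup>2 + b\<^sup>2 * V = V / (T\<^sup>2 + V)"
proof -
  have "0 < T\<^sup>2 + V"
    using assms by (simp add: add_nonneg_pos)
  then show ?thesis
    using quadratic_complete_square[of T V b] unfolding b_def by (simp add: field_simps)
qed

lemma ratio_le_imp_snr_le:
  fixes t v T V :: real
  assumes "0 < v" "0 < V" "0 < t"
    and "v / (t\<^sup>2 + v) \<le> V / (T\<^sup>2 + V)"
  shows "T / sqrt V \<le> t / sqrt v"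
proof -
  have "0 < t\<^sup>2 + v" "0 < T\<^sup>2 + V"
    using assms by (simp_all add: add_nonneg_pos)
  then have "v * T\<^sup>2 \<le> V * t\<^sup>2"
    using assms(4) by (simp add: divide_le_eq le_divide_eq algebra_simps)
  then have "T\<^sup>2 / V \<le> t\<^sup>2 / v"
    using assms(1,2) by (simp add: divide_le_eq le_divide_eq mult.commute)
  have "T / sqrt V \<le> \<bar>T\<bar> / sqrt V"
    using assms(2) by (simp add: divide_right_mono)
  also have "\<dots> = sqrt (T\<^sup>2 / V)"
    by (simp add: real_sqrt_divide)
  also have "\<dots> \<le> sqrt (t\<^sup>2 / v)"
    using \<open>T\<^sup>2 / V \<le> t\<^sup>2 / v\<close> by simp
  also have "\<dots> = t / sqrt v"
    using assms(3) by (simp add: real_sqrt_divide)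
  finally show ?thesis .
qed

lemma snr_le_if_quadratic_le:
  fixes t v T V :: real
  assumes "0 < v" "0 < V" and le: "\<And>b. (1 - t)\<^sup>2 + v \<le> (1 - b * T)\<^sup>2 + b\<^sup>2 * V"
  shows "T / sqrt V \<le> t / sqrt v"
proof (rule ratio_le_imp_snr_le)
  have "(1 - t)\<^sup>2 + v \<le> 1"
    using le[of 0] by simp
  then show "0 < t"
    using \<open>0 < v\<close> one_le_power[of "1 - t" 2] by fastforce
  have "v / (t\<^sup>2 + v) \<le> (1 - t)\<^sup>2 + v"
    using quadratic_min_le[OF \<open>0 < v\<close>, of t 1] by simp
  also have "\<dots> \<le> V / (T\<^sup>2 + V)"
    using le[of "T / (T\<^sup>2 + V)"] unfolding quadratic_at_argmin[OF \<open>0 < V\<close>] .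
  finally show "v / (t\<^sup>2 + v) \<le> V / (T\<^sup>2 + V)" .
qed (use assms in auto)

locale sqloss_setting =
  fixes X :: "'a::euclidean_space set" and P Q :: "'a measure" and c :: real
  assumes prob_P: "prob_space P" and sets_P: "sets P = sets (restrict_space borel X)"
    and prob_Q: "prob_space Q" and sets_Q: "sets Q = sets (restrict_space borel X)"
    and c_pos: "0 < c" and c_less_1: "c < 1"
begin

lemma sqloss_affine_Fcls:
  assumes "h \<in> Fcls X P Q"
  shows "sqloss P Q c (\<lambda>x. a + b * h x)
    = ((1 - c) * (1 - b * (\<integral>x. h x \<partial>P)) - c * b * (\<integral>y. h y \<partial>Q) - a)\<^sup>2
      + c * (1 - c) * ((1 - b * tau P Q h)\<^sup>2 + b\<^sup>2 * sigma2 P Q c h)"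
proof (rule sqloss_affine)
  show "h \<in> borel_measurable P" "h \<in> borel_measurable Q"
    using measurable_Fcls sets_P sets_Q assms by blast+
  show "integrable P (\<lambda>x. (h x)\<^sup>2)" "integrable Q (\<lambda>y. (h y)\<^sup>2)"
    using assms unfolding Fcls_def by simp_all
qed (use prob_P prob_Q c_pos c_less_1 in auto)

lemma sqloss_minimizer_le_affine:
  assumes hstar: "hstar \<in> Fcls X P Q"
    and minimal: "\<forall>h\<in>Fcls X P Q. sqloss P Q c hstar \<le> sqloss P Q c h"
    and g: "g \<in> Fcls X P Q"
  shows "(1 - tau P Q hstar)\<^sup>2 + sigma2 P Q c hstar \<le> (1 - b * tau P Q g)\<^sup>2 + b\<^sup>2 * sigma2 P Q c g"
proof -
  define a where "a = (1 - c) * (1 - b * (\<integral>x. g x \<partial>P)) - c * b * (\<integral>y. g y \<partial>Q)"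
  have "c * (1 - c) * ((1 - tau P Q hstar)\<^sup>2 + sigma2 P Q c hstar)
      \<le> sqloss P Q c (\<lambda>x. 0 + 1 * hstar x)"
    unfolding sqloss_affine_Fcls[OF hstar] by simp
  also have "\<dots> \<le> sqloss P Q c (\<lambda>x. a + b * g x)"
    using minimal Fcls_affine[OF prob_space.finite_measure[OF prob_P] sets_P
        prob_space.finite_measure[OF prob_Q] sets_Q g] by simp
  also have "\<dots> = c * (1 - c) * ((1 - b * tau P Q g)\<^sup>2 + b\<^sup>2 * sigma2 P Q c g)"
    unfolding sqloss_affine_Fcls[OF g] a_def by simp
  finally show ?thesis
    using c_pos c_less_1 by (simp add: mult_le_cancel_left_pos)
qed

end

theorem proposition1:
  fixes X :: "'a::euclidean_space set"
    and P Q :: "'a measure"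
    and c :: real
    and hstar :: "'a \<Rightarrow> real"
  assumes "X \<noteq> {}"
    and "prob_space P" and "prob_space Q"
    and "space P = X" and "sets P = sets (restrict_space borel X)"
    and "space Q = X" and "sets Q = sets (restrict_space borel X)"
    and "0 < c" and "c < 1"
    and "\<forall>h\<in>Fcls X P Q. sqloss P Q c h > 0"
    and "hstar \<in> Fcls X P Q"
    and "\<forall>h\<in>Fcls X P Q. sqloss P Q c hstar \<le> sqloss P Q c h"
    and "sigma P Q c hstar > 0"
  shows "\<forall>h\<in>Fcls X P Q. sigma P Q c h > 0 \<longrightarrow> SNR P Q c hstar \<ge> SNR P Q c h"
proof (intro ballI impI)
  interpret sqloss_setting X P Q c
    using assms by (simp add: sqloss_setting_def)
  fix h assume "h \<in> Fcls X P Q" and "sigma P Q c h > 0"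
  then have "tau P Q h / sqrt (sigma2 P Q c h) \<le> tau P Q hstar / sqrt (sigma2 P Q c hstar)"
    using snr_le_if_quadratic_le sqloss_minimizer_le_affine[OF assms(11,12)] assms(13)
    unfolding sigma_def by simp
  then show "SNR P Q c hstar \<ge> SNR P Q c h"
    unfolding SNR_def sigma_def .
qed

end
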